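(* Let $N\ge2$ and let $x(t)=(x_1(t),\dots,x_N(t))$, $x_i(t)\in\mathbb{R}$, be a (Carathéodory) solution of $$\dot x_i(t)=\frac{\lambda_i(x)}{N}\sum_{j=1}^N M_{ij}(t)\,\phi_{ij}(x_i,x_j)\,(x_j(t)-x_i(t)),\qquad i=1,\dots,N,$$ where all $M_{ij}:[0,+\infty)\to[0,1]$ are Lebesgue measurable and $\lambda_i:\mathbb{R}^N\to\mathbb{R}^+$, $\phi_{ij}:\mathbb{R}\times\mathbb{R}\to\mathbb{R}^+$ are Lipschitz continuous and strictly positive. Assume that $x_+^*:=\max\{x_i(t):i=1,\dots,N\}$ is constant in $t$, and let $I^+(t)$ be the set of indices $i$ with $x_i(t)=x_+^*$. Then if $i\notin I^+(t)$, it holds $i\notin I^+(t+h)$ for all $h>0$. Similarly, if $x_-^*:=\min\{x_i(t):i=1,\dots,N\}$ is constant in $t$ and $I^-(t)$ is the set of indices with $x_i(t)=x_-^*$, then $i\notin I^-(t)$ implies $i\notin I^-(t+h)$ for all $h>0$. *)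

theory Defs
  imports "HOL-Analysis.Analysis"
begin

definition rhs ::
  "('n::finite \<Rightarrow> real ^ 'n \<Rightarrow> real) \<Rightarrow> ('n \<Rightarrow> 'n \<Rightarrow> real \<Rightarrow> real)
   \<Rightarrow> ('n \<Rightarrow> 'n \<Rightarrow> real \<Rightarrow> real \<Rightarrow> real) \<Rightarrow> real ^ 'n \<Rightarrow> real \<Rightarrow> 'n \<Rightarrow> real" where
  "rhs lam M phi v s i =
     lam i v / real CARD('n) *
       (\<Sum>j\<in>UNIV. M i j s * phi i j (v $ i) (v $ j) * (v $ j - v $ i))"

text \<open>Caratheodory solution on [0,+infinity): every component is the integral of the
  (Lebesgue integrable) right-hand side, i.e. it is absolutely continuous on every
  compact interval [0,t] and satisfies the ODE almost everywhere.\<close>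
definition carath_solution ::
  "('n::finite \<Rightarrow> real ^ 'n \<Rightarrow> real) \<Rightarrow> ('n \<Rightarrow> 'n \<Rightarrow> real \<Rightarrow> real)
   \<Rightarrow> ('n \<Rightarrow> 'n \<Rightarrow> real \<Rightarrow> real \<Rightarrow> real) \<Rightarrow> (real \<Rightarrow> real ^ 'n) \<Rightarrow> bool" where
  "carath_solution lam M phi x \<longleftrightarrow>
     (\<forall>i. \<forall>t\<ge>0.
        (\<lambda>s. rhs lam M phi (x s) s i) absolutely_integrable_on {0..t} \<and>
        x t $ i = x 0 $ i + integral {0..t} (\<lambda>s. rhs lam M phi (x s) s i))"

end

theory Submission
  imports Defs
begin

(* If c bounds every component from above, then y = c - x_i is nonnegative, and since the
   i-th right-hand side is at most B (c - x_i), where B bounds lam_i phi_ij along the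
   trajectory, y satisfies y' >= -B y in integrated form: y decays at most exponentially and
   cannot reach 0 from a positive value. Concretely, if s is the first zero of y and m the
   maximum of y on [s - 1/(2B), s], then m <= B (1/(2B)) m, so m = 0, contradicting the
   minimality of s unless s is the initial time. The statement for the minimum follows by
   applying this to -x. *)

lemma zero_propagates_backward_step:
  fixes y g :: "real \<Rightarrow> real"
  assumes "r \<le> s" and "0 \<le> K" and "K * (s - r) < 1"
    and y_cont: "continuous_on {r..s} y" and y_nonneg: "\<And>u. u \<in> {r..s} \<Longrightarrow> 0 \<le> y u"
    and g_int: "g integrable_on {r..s}" and g_le: "\<And>u. u \<in> {r..s} \<Longrightarrow> g u \<le> K * y u"
    and y_eq: "\<And>u. u \<in> {r..s} \<Longrightarrow> y u - y s = integral {u..s} g"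
    and "y s = 0"
  shows "y r = 0"
proof -
  obtain m where m: "m \<in> {r..s}" and m_max: "\<And>u. u \<in> {r..s} \<Longrightarrow> y u \<le> y m"
    using continuous_attains_sup[OF compact_Icc _ y_cont] \<open>r \<le> s\<close> by auto
  have "y m = integral {m..s} g"
    using y_eq[OF m] \<open>y s = 0\<close> by simp
  also have "\<dots> \<le> integral {m..s} (\<lambda>_. K * y m)"
  proof (rule integral_le)
    show "g integrable_on {m..s}"
      using integrable_on_subinterval[OF g_int] m by auto
    show "g u \<le> K * y m" if "u \<in> {m..s}" for u
    proof -
      have "u \<in> {r..s}" using that m by auto
      then show ?thesis
        using g_le m_max \<open>0 \<le> K\<close> by (meson mult_left_mono order_trans)
    qed
  qed (rule integrable_const_ivl)
  also have "\<dots> = K * (s - m) * y m"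
    using m by simp
  finally have "(1 - K * (s - m)) * y m \<le> 0"
    by (simp add: algebra_simps)
  moreover have "K * (s - m) \<le> K * (s - r)"
    using \<open>0 \<le> K\<close> m by (intro mult_left_mono) auto
  then have "K * (s - m) < 1"
    using \<open>K * (s - r) < 1\<close> by simp
  ultimately have "y m \<le> 0"
    by (simp add: mult_le_0_iff)
  then show ?thesis
    using m_max[of r] y_nonneg[of r] \<open>r \<le> s\<close> by simp
qed

lemma zero_propagates_backward:
  fixes y g :: "real \<Rightarrow> real"
  assumes "t \<le> T"
    and y_cont: "continuous_on {t..T} y" and y_nonneg: "\<And>u. u \<in> {t..T} \<Longrightarrow> 0 \<le> y u"
    and g_int: "g integrable_on {t..T}" and g_le: "\<And>u. u \<in> {t..T} \<Longrightarrow> g u \<le> K * y u"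
    and y_eq: "\<And>r s. t \<le> r \<Longrightarrow> r \<le> s \<Longrightarrow> s \<le> T \<Longrightarrow> y r - y s = integral {r..s} g"
    and "y T = 0"
  shows "y t = 0"
proof -
  define K' where "K' = max K 1"
  have "K' > 0" by (simp add: K'_def)
  have g_le': "g u \<le> K' * y u" if "u \<in> {t..T}" for u
    using g_le[OF that] y_nonneg[OF that] mult_right_mono[of K K' "y u"] by (simp add: K'_def)
  have "bounded {u \<in> {t..T}. y u = 0}"
    by (rule bounded_subset[OF bounded_closed_interval]) auto
  then have "compact {u \<in> {t..T}. y u = 0}"
    using continuous_closed_preimage_constant[OF y_cont closed_atLeastAtMost]
    by (simp add: compact_eq_bounded_closed)
  moreover have "T \<in> {u \<in> {t..T}. y u = 0}"
    using \<open>t \<le> T\<close> \<open>y T = 0\<close> by simp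
  ultimately obtain s where s: "s \<in> {t..T}" "y s = 0"
    and s_first: "\<And>u. u \<in> {t..T} \<Longrightarrow> y u = 0 \<Longrightarrow> s \<le> u"
    using compact_attains_inf[of "{u \<in> {t..T}. y u = 0}"] by blast
  define d where "d = 1 / (2 * K')"
  have "d > 0" "K' * d = 1 / 2"
    using \<open>K' > 0\<close> by (auto simp: d_def)
  define r where "r = max t (s - d)"
  have r: "r \<in> {t..s}"
    using s \<open>d > 0\<close> by (auto simp: r_def)
  have "y r = 0"
  proof (rule zero_propagates_backward_step[where y = y and g = g and K = K' and s = s])
    have "K' * (s - r) \<le> K' * d"
      using \<open>K' > 0\<close> by (intro mult_left_mono) (auto simp: r_def)
    then show "K' * (s - r) < 1"
      using \<open>K' * d = 1 / 2\<close> by simp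
    show "continuous_on {r..s} y" "g integrable_on {r..s}"
      using continuous_on_subset[OF y_cont] integrable_on_subinterval[OF g_int] r s by auto
    show "y u - y s = integral {u..s} g" if "u \<in> {r..s}" for u
      using y_eq[of u s] that r s by auto
    show "r \<le> s" "0 \<le> K'" "y s = 0"
      using r s \<open>K' > 0\<close> by auto
    show "0 \<le> y u" "g u \<le> K' * y u" if "u \<in> {r..s}" for u
      using y_nonneg g_le' that r s by auto
  qed
  then have "s \<le> r"
    using s_first r s by auto
  then have "s = t"
    using r s \<open>d > 0\<close> by (auto simp: r_def max_def split: if_splits)
  then show ?thesis
    using s by simp
qed

lemma carath_solution_eq_integral:
  assumes "carath_solution lam M phi x" and "0 \<le> t"
  shows "x t $ i = x 0 $ i + integral {0..t} (\<lambda>s. rhs lam M phi (x s) s i)"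
  using assms unfolding carath_solution_def by blast

lemma carath_solution_integrable:
  assumes "carath_solution lam M phi x" and "0 \<le> T"
  shows "(\<lambda>s. rhs lam M phi (x s) s i) integrable_on {0..T}"
  using assms unfolding carath_solution_def absolutely_integrable_on_def by blast

lemma carath_solution_increment:
  assumes sol: "carath_solution lam M phi x" and rs: "0 \<le> r" "r \<le> s"
  shows "x s $ i - x r $ i = integral {r..s} (\<lambda>u. rhs lam M phi (x u) u i)"
proof -
  let ?f = "\<lambda>u. rhs lam M phi (x u) u i"
  have "?f integrable_on {0..s}"
    using carath_solution_integrable[OF sol] assms by simp
  then have "integral {0..r} ?f + integral {r..s} ?f = integral {0..s} ?f"
    by (rule Henstock_Kurzweil_Integration.integral_combine[OF rs])
  moreover have "x s $ i = x 0 $ i + integral {0..s} ?f" "x r $ i = x 0 $ i + integral {0..r} ?f"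
    using carath_solution_eq_integral[OF sol, of s i] carath_solution_eq_integral[OF sol, of r i] rs
    by simp_all
  ultimately show ?thesis
    by simp
qed

lemma carath_solution_continuous:
  assumes sol: "carath_solution lam M phi x" and "0 \<le> T"
  shows "continuous_on {0..T} x"
proof -
  have "continuous_on {0..T} (\<lambda>u. x 0 $ i + integral {0..u} (\<lambda>s. rhs lam M phi (x s) s i))" for i
    using indefinite_integral_continuous_1[OF carath_solution_integrable[OF assms]]
    by (intro continuous_intros)
  moreover have "x u $ i = x 0 $ i + integral {0..u} (\<lambda>s. rhs lam M phi (x s) s i)"
    if "u \<in> {0..T}" for u i
    using carath_solution_eq_integral[OF sol, of u i] that by simp
  ultimately have "continuous_on {0..T} (\<lambda>u. \<chi> i. x u $ i)"
    by (intro continuous_on_vec_lambda) (metis (no_types, lifting) continuous_on_cong)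
  then show ?thesis
    by simp
qed

lemma rhs_le_distance_to_upper_bound:
  fixes v :: "real ^ 'n::finite"
  assumes M: "\<And>j. M i j s \<in> {0..1}"
    and w_nonneg: "\<And>j. 0 \<le> lam i v * phi i j (v $ i) (v $ j)"
    and w_le: "\<And>j. lam i v * phi i j (v $ i) (v $ j) \<le> B"
    and v_le: "\<And>j. v $ j \<le> c"
  shows "rhs lam M phi v s i \<le> B * (c - v $ i)"
proof -
  have term_le: "lam i v * (M i j s * phi i j (v $ i) (v $ j) * (v $ j - v $ i)) \<le> B * (c - v $ i)"
    for j
  proof -
    let ?w = "lam i v * phi i j (v $ i) (v $ j)"
    have "lam i v * (M i j s * phi i j (v $ i) (v $ j) * (v $ j - v $ i)) = M i j s * ?w * (v $ j - v $ i)"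
      by (simp add: algebra_simps)
    also have "\<dots> \<le> M i j s * ?w * (c - v $ i)"
      using M[of j] w_nonneg[of j] v_le[of j] by (intro mult_left_mono) auto
    also have "\<dots> \<le> ?w * (c - v $ i)"
      using M[of j] w_nonneg[of j] v_le[of i] by (intro mult_right_mono) (auto intro: mult_left_le_one_le)
    also have "\<dots> \<le> B * (c - v $ i)"
      using w_le[of j] v_le[of i] by (intro mult_right_mono) auto
    finally show ?thesis .
  qed
  have "rhs lam M phi v s i
      = (\<Sum>j\<in>UNIV. lam i v * (M i j s * phi i j (v $ i) (v $ j) * (v $ j - v $ i))) / real CARD('n)"
    by (simp add: rhs_def sum_distrib_left sum_divide_distrib)
  also have "\<dots> \<le> (\<Sum>j\<in>(UNIV :: 'n set). B * (c - v $ i)) / real CARD('n)"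
    by (intro divide_right_mono sum_mono term_le) simp
  also have "\<dots> = B * (c - v $ i)"
    by simp
  finally show ?thesis .
qed

lemma coupling_weights_bounded:
  fixes x :: "real \<Rightarrow> real ^ 'n::finite"
    and lam :: "'n \<Rightarrow> real ^ 'n \<Rightarrow> real"
    and phi :: "'n \<Rightarrow> 'n \<Rightarrow> real \<Rightarrow> real \<Rightarrow> real"
  assumes "compact S" and x_cont: "continuous_on S x"
    and lam_cont: "\<And>i. continuous_on UNIV (lam i)"
    and phi_cont: "\<And>i j. continuous_on UNIV (\<lambda>p::real \<times> real. phi i j (fst p) (snd p))"
  shows "\<exists>B. \<forall>u\<in>S. \<forall>i j. lam i (x u) * phi i j (x u $ i) (x u $ j) \<le> B"
proof -
  define w where "w u p = lam (fst p) (x u) * phi (fst p) (snd p) (x u $ fst p) (x u $ snd p)"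
    for u p
  have "continuous_on S (\<lambda>u. w u p)" for p
  proof -
    have "continuous_on S (\<lambda>u. lam (fst p) (x u))"
      using continuous_on_compose2[OF lam_cont x_cont] by simp
    moreover have "continuous_on S (\<lambda>u. phi (fst p) (snd p) (x u $ fst p) (x u $ snd p))"
      using continuous_on_compose2[OF phi_cont continuous_on_Pair[OF
          continuous_on_component[OF x_cont] continuous_on_component[OF x_cont]]] by simp
    ultimately show ?thesis
      unfolding w_def by (rule continuous_on_mult)
  qed
  then have "continuous_on S (\<lambda>u. \<Sum>p\<in>UNIV. \<bar>w u p\<bar>)"
    by (intro continuous_intros)
  then have "bounded ((\<lambda>u. \<Sum>p\<in>UNIV. \<bar>w u p\<bar>) ` S)"
    using compact_continuous_image compact_imp_bounded \<open>compact S\<close> by blast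
  then obtain B where B: "\<And>u. u \<in> S \<Longrightarrow> \<bar>\<Sum>p\<in>UNIV. \<bar>w u p\<bar>\<bar> \<le> B"
    unfolding bounded_real by blast
  have "w u (i, j) \<le> B" if "u \<in> S" for u i j
  proof -
    have "w u (i, j) \<le> (\<Sum>p\<in>UNIV. \<bar>w u p\<bar>)"
      using member_le_sum[of "(i, j)" UNIV "\<lambda>p. \<bar>w u p\<bar>"] by simp
    then show ?thesis
      using B[OF that] by simp
  qed
  then show ?thesis
    unfolding w_def by auto
qed

lemma carath_solution_stays_below_bound:
  fixes x :: "real \<Rightarrow> real ^ 'n::finite"
    and lam :: "'n \<Rightarrow> real ^ 'n \<Rightarrow> real"
    and phi :: "'n \<Rightarrow> 'n \<Rightarrow> real \<Rightarrow> real \<Rightarrow> real"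
  assumes sol: "carath_solution lam M phi x"
    and M_range: "\<And>i j t. 0 \<le> t \<Longrightarrow> M i j t \<in> {0..1}"
    and lam_cont: "\<And>i. continuous_on UNIV (lam i)" and lam_nonneg: "\<And>i v. 0 \<le> lam i v"
    and phi_cont: "\<And>i j. continuous_on UNIV (\<lambda>p::real \<times> real. phi i j (fst p) (snd p))"
    and phi_nonneg: "\<And>i j a b. 0 \<le> phi i j a b"
    and bound: "\<And>u j. 0 \<le> u \<Longrightarrow> x u $ j \<le> c"
    and "0 \<le> t" "t \<le> T" "x t $ i < c"
  shows "x T $ i < c"
proof (rule ccontr)
  assume "\<not> x T $ i < c"
  then have "x T $ i = c"
    using bound[of T i] \<open>0 \<le> t\<close> \<open>t \<le> T\<close> by simp
  have "\<exists>B. \<forall>u\<in>{0..T}. \<forall>i j. lam i (x u) * phi i j (x u $ i) (x u $ j) \<le> B"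
    using carath_solution_continuous[OF sol, of T] \<open>0 \<le> t\<close> \<open>t \<le> T\<close>
    by (intro coupling_weights_bounded lam_cont phi_cont) auto
  then obtain B where B: "\<And>u i j. u \<in> {0..T} \<Longrightarrow> lam i (x u) * phi i j (x u $ i) (x u $ j) \<le> B"
    by blast
  have "c - x t $ i = 0"
  proof (rule zero_propagates_backward[where y = "\<lambda>u. c - x u $ i" and T = T
        and g = "\<lambda>u. rhs lam M phi (x u) u i" and K = B])
    show "continuous_on {t..T} (\<lambda>u. c - x u $ i)"
      using carath_solution_continuous[OF sol, of T] \<open>0 \<le> t\<close> \<open>t \<le> T\<close>
      by (intro continuous_intros) (auto elim: continuous_on_subset)
    show "(\<lambda>u. rhs lam M phi (x u) u i) integrable_on {t..T}"
      using integrable_on_subinterval[OF carath_solution_integrable[OF sol, of T i]]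
        \<open>0 \<le> t\<close> \<open>t \<le> T\<close> by simp
    show "(c - x r $ i) - (c - x s $ i) = integral {r..s} (\<lambda>u. rhs lam M phi (x u) u i)"
      if "t \<le> r" "r \<le> s" "s \<le> T" for r s
      using carath_solution_increment[OF sol, of r s i] that \<open>0 \<le> t\<close> by simp
    show "rhs lam M phi (x u) u i \<le> B * (c - x u $ i)" if "u \<in> {t..T}" for u
      using that \<open>0 \<le> t\<close> M_range lam_nonneg phi_nonneg bound B
      by (intro rhs_le_distance_to_upper_bound) auto
  qed (use bound \<open>0 \<le> t\<close> \<open>t \<le> T\<close> \<open>x T $ i = c\<close> in auto)
  then show False
    using \<open>x t $ i < c\<close> by simp
qed

lemma rhs_reflect:
  "rhs (\<lambda>i v. lam i (- v)) M (\<lambda>i j a b. phi i j (- a) (- b)) (- v) s i = - rhs lam M phi v s i"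
proof -
  have "(\<Sum>j\<in>UNIV. M i j s * phi i j (v $ i) (v $ j) * ((- v) $ j - (- v) $ i))
      = - (\<Sum>j\<in>UNIV. M i j s * phi i j (v $ i) (v $ j) * (v $ j - v $ i))"
    unfolding sum_negf[symmetric] by (rule sum.cong) (simp_all add: algebra_simps)
  then show ?thesis
    unfolding rhs_def by simp
qed

lemma carath_solution_reflect:
  assumes sol: "carath_solution lam M phi x"
  shows "carath_solution (\<lambda>i v. lam i (- v)) M (\<lambda>i j a b. phi i j (- a) (- b)) (\<lambda>t. - x t)"
  unfolding carath_solution_def rhs_reflect
proof (intro allI impI conjI)
  fix i and t :: real
  assume "0 \<le> t"
  then have "(\<lambda>s. rhs lam M phi (x s) s i) absolutely_integrable_on {0..t}"
    and "x t $ i = x 0 $ i + integral {0..t} (\<lambda>s. rhs lam M phi (x s) s i)"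
    using sol unfolding carath_solution_def by blast+
  then show "(\<lambda>s. - rhs lam M phi (x s) s i) absolutely_integrable_on {0..t}"
    and "(- x t) $ i = (- x 0) $ i + integral {0..t} (\<lambda>s. - rhs lam M phi (x s) s i)"
    by (simp_all add: absolutely_integrable_on_def integrable_neg_iff)
qed

lemma carath_solution_stays_above_bound:
  fixes x :: "real \<Rightarrow> real ^ 'n::finite"
    and lam :: "'n \<Rightarrow> real ^ 'n \<Rightarrow> real"
    and phi :: "'n \<Rightarrow> 'n \<Rightarrow> real \<Rightarrow> real \<Rightarrow> real"
  assumes sol: "carath_solution lam M phi x"
    and M_range: "\<And>i j t. 0 \<le> t \<Longrightarrow> M i j t \<in> {0..1}"
    and lam_cont: "\<And>i. continuous_on UNIV (lam i)" and lam_nonneg: "\<And>i v. 0 \<le> lam i v"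
    and phi_cont: "\<And>i j. continuous_on UNIV (\<lambda>p::real \<times> real. phi i j (fst p) (snd p))"
    and phi_nonneg: "\<And>i j a b. 0 \<le> phi i j a b"
    and "\<And>u j. 0 \<le> u \<Longrightarrow> c \<le> x u $ j"
    and "0 \<le> t" "t \<le> T" "c < x t $ i"
  shows "c < x T $ i"
proof -
  have lam_refl_cont: "continuous_on UNIV (\<lambda>v. lam i (- v))" for i
    using continuous_on_compose2[OF lam_cont continuous_on_minus[OF continuous_on_id]] by simp
  have phi_refl_cont: "continuous_on UNIV (\<lambda>p::real \<times> real. phi i j (- fst p) (- snd p))" for i j
    using continuous_on_compose2[OF phi_cont continuous_on_minus[OF continuous_on_id]] by simp
  have "(- x T) $ i < - c"
    by (rule carath_solution_stays_below_bound[OF carath_solution_reflect[OF sol] M_range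
          lam_refl_cont lam_nonneg phi_refl_cont phi_nonneg, where t = t])
      (use assms in auto)
  then show ?thesis
    by simp
qed

theorem lemma1:
  fixes x :: "real \<Rightarrow> real ^ 'n"
    and lam :: "'n \<Rightarrow> real ^ 'n \<Rightarrow> real"
    and M :: "'n \<Rightarrow> 'n \<Rightarrow> real \<Rightarrow> real"
    and phi :: "'n \<Rightarrow> 'n \<Rightarrow> real \<Rightarrow> real \<Rightarrow> real"
  assumes N2: "CARD('n) \<ge> 2"
    and M_meas: "\<And>i j. M i j \<in> borel_measurable (restrict_space lebesgue {0..})"
    and M_range: "\<And>i j t. t \<ge> 0 \<Longrightarrow> M i j t \<in> {0..1}"
    and lam_lip: "\<And>i. \<exists>L. L-lipschitz_on UNIV (lam i)"
    and lam_pos: "\<And>i v. lam i v > 0"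
    and phi_lip: "\<And>i j. \<exists>L. L-lipschitz_on UNIV (\<lambda>p::real \<times> real. phi i j (fst p) (snd p))"
    and phi_pos: "\<And>i j a b. phi i j a b > 0"
    and sol: "carath_solution lam M phi x"
  shows "(\<forall>c. (\<forall>t\<ge>0. Max (range (\<lambda>i. x t $ i)) = c) \<longrightarrow>
            (\<forall>t\<ge>0. \<forall>h>0. \<forall>i. x t $ i \<noteq> c \<longrightarrow> x (t + h) $ i \<noteq> c))
       \<and> (\<forall>c. (\<forall>t\<ge>0. Min (range (\<lambda>i. x t $ i)) = c) \<longrightarrow>
            (\<forall>t\<ge>0. \<forall>h>0. \<forall>i. x t $ i \<noteq> c \<longrightarrow> x (t + h) $ i \<noteq> c))"
proof -
  have lam_cont: "continuous_on UNIV (lam i)" for i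
    using lam_lip[of i] by (metis lipschitz_on_continuous_on)
  have phi_cont: "continuous_on UNIV (\<lambda>p::real \<times> real. phi i j (fst p) (snd p))" for i j
    using phi_lip[of i j] by (metis lipschitz_on_continuous_on)
  note below = carath_solution_stays_below_bound[OF sol M_range lam_cont
      less_imp_le[OF lam_pos] phi_cont less_imp_le[OF phi_pos]]
  note above = carath_solution_stays_above_bound[OF sol M_range lam_cont
      less_imp_le[OF lam_pos] phi_cont less_imp_le[OF phi_pos]]
  show ?thesis
  proof (intro conjI allI impI)
    fix c t h :: real and i
    assume max: "\<forall>t\<ge>0. Max (range (\<lambda>i. x t $ i)) = c"
      and "0 \<le> t" "0 < h" "x t $ i \<noteq> c"
    have le: "x u $ j \<le> c" if "0 \<le> u" for u j
      using Max_ge[of "range (\<lambda>i. x u $ i)" "x u $ j"] max that by auto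
    have "x (t + h) $ i < c"
      by (rule below[where t = t])
        (use le \<open>0 \<le> t\<close> \<open>0 < h\<close> \<open>x t $ i \<noteq> c\<close> in \<open>auto simp: order_less_le\<close>)
    then show "x (t + h) $ i \<noteq> c"
      by simp
  next
    fix c t h :: real and i
    assume min: "\<forall>t\<ge>0. Min (range (\<lambda>i. x t $ i)) = c"
      and "0 \<le> t" "0 < h" "x t $ i \<noteq> c"
    have ge: "c \<le> x u $ j" if "0 \<le> u" for u j
      using Min_le[of "range (\<lambda>i. x u $ i)" "x u $ j"] min that by auto
    have "c < x (t + h) $ i"
      by (rule above[where t = t])
        (use ge \<open>0 \<le> t\<close> \<open>0 < h\<close> \<open>x t $ i \<noteq> c\<close> in \<open>auto simp: order_less_le\<close>)
    then show "x (t + h) $ i \<noteq> c"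
      by simp
  qed
qed

end
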